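(* Let $\Phi(z)=\sum_{n\ge1}\varphi_nz^n$ be the power series, analytic near $0$, with $\varphi_1=1$ satisfying $$\int_0^1\Phi\big(rz+(1-r)z^2\big)\,dr=\tfrac12\,\Phi(z).$$ Then $F(z)=\int_0^z\Phi(\zeta)d\zeta$ satisfies $\frac{F(z)-F(z^2)}{z-z^2}=\frac12F'(z)$, and for all $n\ge2$: $$\varphi_n=\frac{n+1}{n-1}\varphi_{n-1}\ \text{ if $n$ is even},\qquad \varphi_n=\frac{n+1}{n-1}\varphi_{n-1}-\frac{4}{n-1}\varphi_{(n-1)/2}\ \text{ if $n$ is odd}.$$ Equivalently, $\psi_n=\varphi_n/n$ satisfies $\psi_1=1$, $\psi_n=(1+\frac1n)\psi_{n-1}$ for even $n$, and $\psi_n=(1+\frac1n)\psi_{n-1}-\frac2n\psi_{(n-1)/2}$ for odd $n\ge3$.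
   Context: This is the equation $\int\Phi(P_r(z))\mu(dr)=\Phi(z)\int p_{1r}\mu(dr)$ for $P_r(z)=rz+(1-r)z^2$ with $r$ uniformly distributed on $(0,1)$. *)

theory Defs
  imports "HOL-Complex_Analysis.Complex_Analysis"
begin

end

theory Submission
  imports Defs
begin

text \<open>
  Let \<open>P\<close> be the power series of \<open>\<Phi>\<close> and \<open>G\<close> its formal antiderivative, so that \<open>F = G\<close>
  near \<open>0\<close>. Integrating \<open>\<Phi>\<close> along the segment from \<open>z^2\<close> to \<open>z\<close> turns the integral equation
  into \<open>G(z) - G(z^2) = (z - z^2) \<Phi>(z) / 2\<close>. Both sides are convergent power series, so this is an
  identity of formal power series, and comparing the coefficients of \<open>z^(n+1)\<close> gives
  \<open>\<phi> n / (n+1) - [n odd] \<phi> ((n-1)/2) / ((n+1)/2) = (\<phi> n - \<phi> (n-1)) / 2\<close>,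
  which is the recurrence solved for \<open>\<phi> n\<close>.
\<close>

lemma fps_conv_radius_fps_integral:
  fixes f :: "'a :: {banach, real_normed_field} fps"
  shows "fps_conv_radius f \<le> fps_conv_radius (fps_integral f c)"
proof -
  have "fps_conv_radius f \<le> fps_conv_radius (fps_shift 1 (fps_integral f c))"
    unfolding fps_conv_radius_def
  proof (rule conv_radius_geI_ex')
    fix r :: real assume "0 < r" "ereal r < conv_radius (fps_nth f)"
    then have "summable (\<lambda>n. norm (f $ n * of_real r ^ n))"
      by (intro abs_summable_in_conv_radius) auto
    then show "summable (\<lambda>n. fps_nth (fps_shift 1 (fps_integral f c)) n * of_real r ^ n)"
    proof (rule summable_comparison_test'[where N = 0])
      fix n :: nat
      have "norm (inverse (of_nat (Suc n) :: 'a)) \<le> 1"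
        by (simp only: norm_inverse norm_of_nat) (simp add: inverse_le_1_iff)
      then show "norm (fps_nth (fps_shift 1 (fps_integral f c)) n * of_real r ^ n) \<le> norm (f $ n * of_real r ^ n)"
        by (simp add: norm_mult mult.assoc mult_left_le_one_le del: of_nat_Suc)
    qed
  qed
  then show ?thesis by simp
qed

lemma has_field_derivative_eval_fps_integral:
  fixes f :: "'a :: {banach, real_normed_field} fps"
  assumes "norm z < fps_conv_radius f"
  shows "(eval_fps (fps_integral f c) has_field_derivative eval_fps f z) (at z within A)"
  using has_field_derivative_eval_fps[of z "fps_integral f c"] fps_conv_radius_fps_integral[of f c] assms
  by (simp add: fps_deriv_fps_integral)

lemma has_contour_integral_eval_fps:
  fixes f :: "complex fps"
  assumes "norm a < fps_conv_radius f" "norm b < fps_conv_radius f"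
  shows "(eval_fps f has_contour_integral
           eval_fps (fps_integral f c) b - eval_fps (fps_integral f c) a) (linepath a b)"
proof -
  obtain r where r: "max (norm a) (norm b) < r" "ereal r \<le> fps_conv_radius f"
    using assms by (metis ereal_dense2 less_ereal.simps(1) max_def order.strict_implies_order)
  have "path_image (linepath a b) \<subseteq> eball 0 (fps_conv_radius f)"
    using closed_segment_subset[of a "ball 0 r" b] ball_eball_mono[OF r(2)] r(1) by auto
  then show ?thesis
    using contour_integral_primitive[of "eball 0 (fps_conv_radius f)" "eval_fps (fps_integral f c)"
            "eval_fps f" "linepath a b"]
    by (auto intro: has_field_derivative_eval_fps_integral)
qed

lemma contour_integral_linepath_0_eval_fps:
  fixes f :: "complex fps"
  assumes "norm z < fps_conv_radius f"
  shows "contour_integral (linepath 0 z) (eval_fps f) = eval_fps (fps_integral0 f) z"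
proof -
  have "norm (0 :: complex) < fps_conv_radius f"
    using assms by (metis ereal_less_eq(3) norm_ge_zero norm_zero order.strict_trans1)
  from has_contour_integral_eval_fps[OF this assms, of 0] show ?thesis
    by (simp add: contour_integral_unique eval_fps_at_0)
qed

lemma deriv_contour_integral_linepath_0_eval_fps:
  fixes f :: "complex fps"
  assumes "norm z < fps_conv_radius f"
  shows "deriv (\<lambda>w. contour_integral (linepath 0 w) (eval_fps f)) z = eval_fps f z"
proof (rule DERIV_imp_deriv)
  show "((\<lambda>w. contour_integral (linepath 0 w) (eval_fps f)) has_field_derivative eval_fps f z) (at z)"
  proof (rule has_field_derivative_transform_within_open)
    show "(eval_fps (fps_integral0 f) has_field_derivative eval_fps f z) (at z)"
      using assms by (rule has_field_derivative_eval_fps_integral)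
    show "eval_fps (fps_integral0 f) w = contour_integral (linepath 0 w) (eval_fps f)"
      if "w \<in> eball 0 (fps_conv_radius f)" for w
      using that by (simp add: contour_integral_linepath_0_eval_fps)
  qed (use assms in simp_all)
qed

lemma eval_fps_integral_diff_eq_segment_integral:
  fixes f :: "complex fps"
  assumes "norm a < fps_conv_radius f" "norm b < fps_conv_radius f"
    and "((\<lambda>r::real. eval_fps f (of_real r * b + (1 - of_real r) * a)) has_integral I) {0..1}"
  shows "eval_fps (fps_integral f c) b - eval_fps (fps_integral f c) a = (b - a) * I"
proof -
  have param: "linepath a b r = of_real r * b + (1 - of_real r) * a" for r
    by (simp add: linepath_def scaleR_conv_of_real algebra_simps)
  have "((\<lambda>r. eval_fps f (linepath a b r) * (b - a)) has_integral
          eval_fps (fps_integral f c) b - eval_fps (fps_integral f c) a) {0..1}"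
    using has_contour_integral_eval_fps[OF assms(1,2)] by (simp add: has_contour_integral_linepath)
  moreover have "((\<lambda>r. eval_fps f (linepath a b r) * (b - a)) has_integral I * (b - a)) {0..1}"
    unfolding param by (rule has_integral_mult_left[OF assms(3)])
  ultimately have "eval_fps (fps_integral f c) b - eval_fps (fps_integral f c) a = I * (b - a)"
    by (rule has_integral_unique)
  then show ?thesis
    by (simp add: mult.commute)
qed

lemma eventually_norm_less_nhds_0:
  fixes R :: ereal
  assumes "0 < R"
  shows "eventually (\<lambda>z :: 'a :: real_normed_vector. norm z < R) (nhds 0)"
proof -
  have "eventually (\<lambda>z. z \<in> eball 0 R) (nhds 0)"
    using assms by (intro eventually_nhds_in_open) (auto simp: zero_ereal_def)
  then show ?thesis
    by eventually_elim (simp add: dist_0_norm)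
qed

lemma norm_power2_less:
  fixes z :: "'a :: real_normed_div_algebra" and R :: ereal
  assumes "norm z \<le> 1" "norm z < R"
  shows "norm (z ^ 2) < R"
proof -
  have "norm (z ^ 2) = norm z * norm z"
    by (simp add: norm_mult power2_eq_square)
  also have "\<dots> \<le> 1 * norm z"
    using assms(1) by (intro mult_right_mono) auto
  finally have "norm (z ^ 2) \<le> norm z"
    by simp
  with assms(2) show ?thesis
    by (meson ereal_less_eq(3) le_less_trans)
qed

lemma square_functional_equation_of_segment_integral:
  fixes P :: "complex fps"
  assumes "norm z \<le> 1" "norm z < fps_conv_radius P"
    and "((\<lambda>r::real. eval_fps P (of_real r * z + (1 - of_real r) * z ^ 2)) has_integral eval_fps P z / 2) {0..1}"
  shows "eval_fps (fps_integral0 P) z - eval_fps (fps_integral0 P) (z ^ 2) = (z - z ^ 2) * eval_fps P z / 2"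
  using eval_fps_integral_diff_eq_segment_integral[OF norm_power2_less[OF assms(1,2)] assms(2,3)] by simp

lemma difference_quotient_contour_integral_eval_fps:
  fixes P :: "complex fps" and F :: "complex \<Rightarrow> complex"
  assumes F: "F = (\<lambda>w. contour_integral (linepath 0 w) (eval_fps P))"
    and z: "0 < norm z" "norm z < 1" "norm z < fps_conv_radius P"
    and "((\<lambda>r::real. eval_fps P (of_real r * z + (1 - of_real r) * z ^ 2)) has_integral eval_fps P z / 2) {0..1}"
  shows "(F z - F (z ^ 2)) / (z - z ^ 2) = deriv F z / 2"
proof -
  have "z - z ^ 2 \<noteq> 0"
    using z(1,2) by (auto simp: power2_eq_square right_diff_distrib[symmetric])
  with square_functional_equation_of_segment_integral[OF _ z(3)] assms norm_power2_less[OF _ z(3)]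
  show ?thesis
    by (simp add: contour_integral_linepath_0_eval_fps deriv_contour_integral_linepath_0_eval_fps)
qed

lemma fps_compose_fps_X_power2_nth:
  fixes f :: "'a :: comm_ring_1 fps"
  shows "(f oo fps_X ^ 2) $ n = (if even n then f $ (n div 2) else 0)"
proof -
  have "(f oo fps_X ^ 2) $ n = (\<Sum>i = 0..n. if n = 2 * i then f $ i else 0)"
    unfolding fps_compose_nth power_mult[symmetric] by (intro sum.cong) (auto simp: fps_X_power_iff)
  also have "\<dots> = (if even n then f $ (n div 2) else 0)"
    by (cases "even n") (auto elim!: evenE intro!: sum.neutral)
  finally show ?thesis .
qed

lemma fps_eq_of_square_functional_equation:
  fixes G P :: "complex fps"
  assumes "fps_conv_radius G > 0" "fps_conv_radius P > 0"
    and "eventually (\<lambda>z. eval_fps G z - eval_fps G (z ^ 2) = (z - z ^ 2) * eval_fps P z / 2) (nhds 0)"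
  shows "G - (G oo fps_X ^ 2) = (fps_X - fps_X ^ 2) * P * fps_const (1 / 2)"
proof (rule fps_expansion_unique_complex)
  have G: "eval_fps G has_fps_expansion G" and P: "eval_fps P has_fps_expansion P"
    using assms(1,2) by (simp_all add: eval_fps_has_fps_expansion)
  show "(\<lambda>z. eval_fps G z - eval_fps G (z ^ 2)) has_fps_expansion G - (G oo fps_X ^ 2)"
    using has_fps_expansion_compose[OF G has_fps_expansion_fps_X_power[of 2]]
    by (auto simp: o_def intro!: fps_expansion_intros G)
  have "(\<lambda>z. (z - z ^ 2) * eval_fps P z * (1 / 2)) has_fps_expansion
          (fps_X - fps_X ^ 2) * P * fps_const (1 / 2)"
    by (intro fps_expansion_intros P)
  then show "(\<lambda>z. eval_fps G z - eval_fps G (z ^ 2)) has_fps_expansion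
               (fps_X - fps_X ^ 2) * P * fps_const (1 / 2)"
    using assms(3) by (subst has_fps_expansion_cong) (auto elim!: eventually_mono)
qed

lemma solve_coefficient_relation:
  fixes a b p x :: "'a :: field_char_0"
  assumes "x \<noteq> 1" "x \<noteq> -1" "a / (x + 1) - 2 * p / (x + 1) = (a - b) / 2"
  shows "a = (x + 1) / (x - 1) * b - 4 / (x - 1) * p"
proof -
  have "x + 1 \<noteq> 0" "x - 1 \<noteq> 0"
    using assms(1,2) by (simp_all add: eq_neg_iff_add_eq_0)
  with assms(3) have "2 * a - 4 * p = (x + 1) * (a - b)"
    by (simp add: field_simps)
  then have "(x - 1) * a = (x + 1) * b - 4 * p"
    by algebra
  with \<open>x - 1 \<noteq> 0\<close> have "a = ((x + 1) * b - 4 * p) / (x - 1)"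
    by (simp add: eq_divide_eq mult.commute)
  then show ?thesis
    by (simp add: diff_divide_distrib)
qed

lemma coeff_recurrence_of_fps_equation:
  fixes P :: "'a :: field_char_0 fps"
  assumes eq: "fps_integral0 P - (fps_integral0 P oo fps_X ^ 2) = (fps_X - fps_X ^ 2) * P * fps_const (1 / 2)"
    and n: "n \<ge> 2"
  shows "even n \<Longrightarrow> P $ n = (of_nat n + 1) / (of_nat n - 1) * P $ (n - 1)"
    and "odd n \<Longrightarrow> P $ n = (of_nat n + 1) / (of_nat n - 1) * P $ (n - 1)
                                 - 4 / (of_nat n - 1) * P $ ((n - 1) div 2)"
proof -
  have "(fps_integral0 P - (fps_integral0 P oo fps_X ^ 2)) $ Suc n
      = P $ n / (of_nat n + 1) - 2 * (if odd n then P $ ((n - 1) div 2) else 0) / (of_nat n + 1)"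
  proof (cases "even n")
    case False
    then obtain m where m: "n = Suc (2 * m)"
      by (auto elim: oddE)
    then have "(of_nat n + 1 :: 'a) = 2 * of_nat (Suc m)" "(of_nat (Suc n) :: 'a) = 2 * of_nat (Suc m)"
      by (simp_all add: algebra_simps)
    with m show ?thesis
      by (simp add: fps_compose_fps_X_power2_nth field_simps del: of_nat_Suc)
  qed (simp add: fps_compose_fps_X_power2_nth field_simps)
  moreover have "((fps_X - fps_X ^ 2) * P * fps_const (1 / 2)) $ Suc n = (P $ n - P $ (n - 1)) / 2"
    using n by (simp add: left_diff_distrib fps_mult_right_const_nth fps_X_power_mult_nth fps_X_mult_nth)
  ultimately have coeff: "P $ n / (of_nat n + 1)
      - 2 * (if odd n then P $ ((n - 1) div 2) else 0) / (of_nat n + 1) = (P $ n - P $ (n - 1)) / 2"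
    by (simp only: eq)
  have x: "of_nat n \<noteq> (1 :: 'a)" "of_nat n \<noteq> (-1 :: 'a)"
    using n of_nat_neq_0[of n] by (auto simp: eq_neg_iff_add_eq_0 add.commute)
  show "even n \<Longrightarrow> P $ n = (of_nat n + 1) / (of_nat n - 1) * P $ (n - 1)"
    using solve_coefficient_relation[OF x, of "P $ n" 0] coeff by simp
  show "odd n \<Longrightarrow> P $ n = (of_nat n + 1) / (of_nat n - 1) * P $ (n - 1)
                                 - 4 / (of_nat n - 1) * P $ ((n - 1) div 2)"
    using solve_coefficient_relation[OF x] coeff by simp
qed

lemma divide_recurrence_by_index:
  fixes b p x :: "'a :: field_char_0"
  assumes "x \<noteq> 0" "x \<noteq> 1"
  shows "((x + 1) / (x - 1) * b - 4 / (x - 1) * p) / x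
           = (1 + 1 / x) * (b / (x - 1)) - 2 / x * (p / ((x - 1) / 2))"
proof -
  have "x - 1 \<noteq> 0"
    using assms(2) by simp
  with assms(1) show ?thesis
    by (simp add: divide_simps)
qed

lemma recurrence_of_coefficients_divided_by_index:
  fixes \<phi> :: "nat \<Rightarrow> 'a :: field_char_0"
  assumes even_rec: "\<forall>n\<ge>2. even n \<longrightarrow> \<phi> n = (of_nat n + 1) / (of_nat n - 1) * \<phi> (n - 1)"
    and odd_rec: "\<forall>n\<ge>2. odd n \<longrightarrow>
            \<phi> n = (of_nat n + 1) / (of_nat n - 1) * \<phi> (n - 1) - 4 / (of_nat n - 1) * \<phi> ((n - 1) div 2)"
    and "\<phi> 1 = 1"
  shows "let \<psi> = (\<lambda>n. \<phi> n / of_nat n) in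
          \<psi> 1 = 1
          \<and> (\<forall>n\<ge>2. even n \<longrightarrow> \<psi> n = (1 + 1 / of_nat n) * \<psi> (n - 1))
          \<and> (\<forall>n\<ge>3. odd n \<longrightarrow>
                 \<psi> n = (1 + 1 / of_nat n) * \<psi> (n - 1) - 2 / of_nat n * \<psi> ((n - 1) div 2))"
  unfolding Let_def
proof (intro conjI allI impI)
  show "\<phi> 1 / of_nat 1 = 1"
    using \<open>\<phi> 1 = 1\<close> by simp
next
  fix n :: nat
  assume n: "2 \<le> n" "even n"
  then have x: "of_nat n \<noteq> (0 :: 'a)" "of_nat n \<noteq> (1 :: 'a)" and "of_nat (n - 1) = (of_nat n - 1 :: 'a)"
    by (simp_all add: of_nat_diff)
  then show "\<phi> n / of_nat n = (1 + 1 / of_nat n) * (\<phi> (n - 1) / of_nat (n - 1))"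
    using divide_recurrence_by_index[OF x, of "\<phi> (n - 1)" 0] even_rec n by simp
next
  fix n :: nat
  assume n: "3 \<le> n" "odd n"
  then have x: "of_nat n \<noteq> (0 :: 'a)" "of_nat n \<noteq> (1 :: 'a)"
    and idx: "of_nat (n - 1) = (of_nat n - 1 :: 'a)" "of_nat ((n - 1) div 2) = (of_nat n - 1) / (2 :: 'a)"
    by (auto simp: of_nat_diff elim!: oddE)
  have "\<phi> n = (of_nat n + 1) / (of_nat n - 1) * \<phi> (n - 1) - 4 / (of_nat n - 1) * \<phi> ((n - 1) div 2)"
    using odd_rec n by simp
  then show "\<phi> n / of_nat n = (1 + 1 / of_nat n) * (\<phi> (n - 1) / of_nat (n - 1))
               - 2 / of_nat n * (\<phi> ((n - 1) div 2) / of_nat ((n - 1) div 2))"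
    unfolding idx by (simp only: divide_recurrence_by_index[OF x])
qed

theorem mainTheorem5:
  fixes \<phi> :: "nat \<Rightarrow> complex" and \<Phi> F :: "complex \<Rightarrow> complex"
  assumes conv: "conv_radius \<phi> > 0"
    and Phi_def: "\<And>z. \<Phi> z = (\<Sum>n. \<phi> n * z ^ n)"
    and phi0: "\<phi> 0 = 0"
    and phi1: "\<phi> 1 = 1"
    and inteq: "\<exists>\<epsilon>>0. \<forall>z. norm z < \<epsilon> \<longrightarrow>
       ((\<lambda>r::real. \<Phi> (of_real r * z + (1 - of_real r) * z ^ 2)) has_integral \<Phi> z / 2) {0..1}"
    and F_def: "\<And>z. F z = contour_integral (linepath 0 z) \<Phi>"
  shows "(\<exists>\<epsilon>>0. \<forall>z. 0 < norm z \<and> norm z < \<epsilon> \<longrightarrow>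
            (F z - F (z ^ 2)) / (z - z ^ 2) = deriv F z / 2)
     \<and> (\<forall>n\<ge>2. even n \<longrightarrow>
            \<phi> n = (of_nat n + 1) / (of_nat n - 1) * \<phi> (n - 1))
     \<and> (\<forall>n\<ge>2. odd n \<longrightarrow>
            \<phi> n = (of_nat n + 1) / (of_nat n - 1) * \<phi> (n - 1)
                    - 4 / (of_nat n - 1) * \<phi> ((n - 1) div 2))
     \<and> (let \<psi> = (\<lambda>n. \<phi> n / of_nat n) in
          \<psi> 1 = 1
          \<and> (\<forall>n\<ge>2. even n \<longrightarrow> \<psi> n = (1 + 1 / of_nat n) * \<psi> (n - 1))
          \<and> (\<forall>n\<ge>3. odd n \<longrightarrow>
                 \<psi> n = (1 + 1 / of_nat n) * \<psi> (n - 1) - 2 / of_nat n * \<psi> ((n - 1) div 2)))"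
proof -
  define P where "P = Abs_fps \<phi>"
  have \<Phi>: "\<Phi> = eval_fps P"
    by (simp add: fun_eq_iff Phi_def P_def eval_fps_def)
  have F: "F = (\<lambda>z. contour_integral (linepath 0 z) (eval_fps P))"
    by (simp add: fun_eq_iff F_def \<Phi>)
  have R: "fps_conv_radius P > 0"
    using conv by (simp add: P_def fps_conv_radius_def)
  have "eventually (\<lambda>z. ((\<lambda>r::real. eval_fps P (of_real r * z + (1 - of_real r) * z ^ 2))
                             has_integral eval_fps P z / 2) {0..1}) (nhds 0)"
    using inteq unfolding \<Phi> eventually_nhds_metric by (simp add: dist_norm)
  moreover have "eventually (\<lambda>z::complex. norm z < 1) (nhds 0)"
    using eventually_norm_less_nhds_0[of "ereal 1"] by simp
  moreover note eventually_norm_less_nhds_0[OF R]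
  ultimately have "eventually (\<lambda>z. norm z < 1 \<and> norm z < fps_conv_radius P \<and>
      ((\<lambda>r::real. eval_fps P (of_real r * z + (1 - of_real r) * z ^ 2)) has_integral eval_fps P z / 2) {0..1})
      (nhds 0)" (is "eventually ?near _")
    by eventually_elim simp
  then obtain \<delta> where "\<delta> > 0" and near: "\<And>z. norm z < \<delta> \<Longrightarrow> ?near z"
    by (auto simp: eventually_nhds_metric dist_norm)
  have "eventually (\<lambda>z. eval_fps (fps_integral0 P) z - eval_fps (fps_integral0 P) (z ^ 2)
                            = (z - z ^ 2) * eval_fps P z / 2) (nhds 0)"
    using \<open>eventually ?near _\<close>
    by eventually_elim (rule square_functional_equation_of_segment_integral; auto)
  with R fps_conv_radius_fps_integral[of P 0]
  have "fps_integral0 P - (fps_integral0 P oo fps_X ^ 2) = (fps_X - fps_X ^ 2) * P * fps_const (1 / 2)"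
    by (intro fps_eq_of_square_functional_equation) auto
  from coeff_recurrence_of_fps_equation[OF this]
  have "\<forall>n\<ge>2. even n \<longrightarrow> \<phi> n = (of_nat n + 1) / (of_nat n - 1) * \<phi> (n - 1)"
    and "\<forall>n\<ge>2. odd n \<longrightarrow> \<phi> n = (of_nat n + 1) / (of_nat n - 1) * \<phi> (n - 1)
                    - 4 / (of_nat n - 1) * \<phi> ((n - 1) div 2)"
    by (simp_all add: P_def)
  with phi1 \<open>\<delta> > 0\<close> near show ?thesis
    using difference_quotient_contour_integral_eval_fps[OF F] recurrence_of_coefficients_divided_by_index
    by blast
qed

end
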